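(* Let $n>3$ be an integer. There exist two distinct $n$-multisets $A\neq B$ of complex numbers with $A^{(3)}=B^{(3)}$ if and only if $n\in\{6,27,486\}$. Moreover, each of the multisets $\{0,1^{16},2^{10}\}$, $\{0^5,1^{10},2^{10},3^2\}$, $\{0,1^5,2^{10},3^6,4^5\}$ (of size $27$) and $\{0^{22},1^{176},2^{231},3^{56},4\}$ (of size $486$) is distinct from its mirror and has the same multiset of $3$-sums as its mirror.
   Context: An $n$-multiset is a multiset $A=\{a_1,\dots,a_n\}$ of $n$ numbers, counted with multiplicity; $x^m$ inside a multiset denotes the element $x$ with multiplicity $m$. For $1\le s\le n$, $A^{(s)}$ denotes the multiset of the $\binom{n}{s}$ numbers $a_{i_1}+\dots+a_{i_s}$ over all $1\le i_1<\dots<i_s\le n$. The mirror of an $n$-multiset $A$ with arithmetic mean $a$ is the multiset $\{2a-a_1,\dots,2a-a_n\}$. *)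

theory Defs
  imports Complex_Main "HOL-Library.Multiset"
begin

text \<open>The multiset of s-sums of an n-multiset A: enumerate A as a list xs (any
enumeration; the result does not depend on it) and sum over all index sets
{i_1 < ... < i_s} of size s, counted with multiplicity.\<close>
definition ssums :: "nat \<Rightarrow> complex multiset \<Rightarrow> complex multiset" where
  "ssums s A =
     (let xs = (SOME xs. mset xs = A)
      in image_mset (\<lambda>I. \<Sum>i\<in>I. xs ! i)
           (mset_set {I. I \<subseteq> {..<size A} \<and> card I = s}))"

definition mirror :: "complex multiset \<Rightarrow> complex multiset" where
  "mirror A = (let a = sum_mset A / of_nat (size A) in image_mset (\<lambda>x. 2 * a - x) A)"

end

theory Submission
  imports Defs "HOL-Number_Theory.Number_Theory" "HOL-Computational_Algebra.Polynomial"
begin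

(* Power sums p_k(X) = sum of x^k over X determine a multiset of complex numbers, and by
     6 * sum_{v in A^(3)} g v = sum g(a+b+c) - 3 * sum g(2a+b) + 2 * sum g(3a)
   the k-th power sum of A^(3) is a polynomial in the power sums of A.  If A and B have
   size n, the same 3-sums, and k is the first index with p_k(A) <> p_k(B), comparing these
   polynomials leaves only the terms containing p_k, whence 3n^2 - 3(2^k+1)n + 2*3^k = 0.
   Then n and 2^k+1-n are 3^a and 2*3^b in some order, with a + b = k - 1.  Their sum
   2^k + 1 is divisible by 3^min(a,b), so 3^(min(a,b)-1) divides k (2 is a primitive root
   modulo every power of 3); hence 3^(k-1) <= 3k(2^k+1), so k < 12, and the remaining
   cases give n in {6, 27, 486}.  Conversely, the 3-sums of the mirror 2a - A are 6a minus
   those of A, so a multiset whose 3-sums are symmetric about 6a collides with its mirror. *)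

section \<open>Subset sums of a multiset\<close>

(* ssums enumerates its argument by an arbitrary list (see index_subset_sums); the
   permutation-invariant recursion subset_sums shows that the choice does not matter. *)
fun subset_sums :: "nat \<Rightarrow> 'a::comm_monoid_add list \<Rightarrow> 'a multiset" where
  "subset_sums 0 xs = {#0#}"
| "subset_sums (Suc s) [] = {#}"
| "subset_sums (Suc s) (x # xs) = subset_sums (Suc s) xs + image_mset ((+) x) (subset_sums s xs)"

lemma subset_sums_remove1:
  assumes "x \<in> set xs"
  shows "subset_sums (Suc s) xs =
    subset_sums (Suc s) (remove1 x xs) + image_mset ((+) x) (subset_sums s (remove1 x xs))"
  using assms
proof (induction xs arbitrary: s)
  case (Cons y ys)
  show ?case
  proof (cases "y = x")
    case False
    with Cons.prems have "x \<in> set ys" by simp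
    with False Cons.IH show ?thesis
      by (cases s) (simp_all add: add_ac multiset.map_comp comp_def)
  qed simp
qed simp

lemma subset_sums_perm: "mset xs = mset ys \<Longrightarrow> subset_sums s xs = subset_sums s ys"
proof (induction xs arbitrary: ys s)
  case (Cons x xs)
  then have "x \<in> set ys" and rest: "mset xs = mset (remove1 x ys)"
    by (metis list.set_intros(1) set_mset_mset, metis add_mset_remove_trivial mset.simps(2) mset_remove1)
  then show ?case
    using Cons.IH[OF rest] by (cases s) (simp_all add: subset_sums_remove1)
qed simp

definition index_subset_sums :: "nat \<Rightarrow> 'a::comm_monoid_add list \<Rightarrow> 'a multiset" where
  "index_subset_sums s xs =
     image_mset (\<lambda>I. \<Sum>i\<in>I. xs ! i) (mset_set {I. I \<subseteq> {..<length xs} \<and> card I = s})"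

lemma index_subset_sums_0: "index_subset_sums 0 xs = {#0#}"
proof -
  have "{I. I \<subseteq> {..<length xs} \<and> card I = 0} = {{}}"
    by (auto dest: finite_subset)
  then show ?thesis by (simp add: index_subset_sums_def)
qed

lemma index_subset_sums_Suc_Nil: "index_subset_sums (Suc s) [] = {#}"
proof -
  have none: "{I. I = {} \<and> card I = Suc s} = {}" by auto
  show ?thesis by (simp add: index_subset_sums_def none)
qed

lemma subsets_card_Suc_lessThan_Suc:
  "{I. I \<subseteq> {..<Suc n} \<and> card I = Suc s} =
     {I. I \<subseteq> {..<n} \<and> card I = Suc s} \<union> insert n ` {I. I \<subseteq> {..<n} \<and> card I = s}"
proof (rule Set.set_eqI, rule iffI)
  fix I assume "I \<in> {I. I \<subseteq> {..<Suc n} \<and> card I = Suc s}"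
  then have I: "I \<subseteq> {..<Suc n}" "card I = Suc s" "finite I"
    by (auto dest: finite_subset)
  show "I \<in> {I. I \<subseteq> {..<n} \<and> card I = Suc s} \<union> insert n ` {I. I \<subseteq> {..<n} \<and> card I = s}"
  proof (cases "n \<in> I")
    case True
    with I have "I = insert n (I - {n})" "I - {n} \<subseteq> {..<n}" "card (I - {n}) = s"
      by (auto simp: less_Suc_eq)
    then show ?thesis by blast
  next
    case False
    with I show ?thesis by (auto simp: less_Suc_eq)
  qed
next
  fix I assume "I \<in> {I. I \<subseteq> {..<n} \<and> card I = Suc s} \<union> insert n ` {I. I \<subseteq> {..<n} \<and> card I = s}"
  then show "I \<in> {I. I \<subseteq> {..<Suc n} \<and> card I = Suc s}"
    by (auto simp: card_insert_if finite_subset[OF _ finite_lessThan])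
qed

lemma index_subset_sums_snoc:
  "index_subset_sums (Suc s) (xs @ [x]) =
     index_subset_sums (Suc s) xs + image_mset ((+) x) (index_subset_sums s xs)"
proof -
  let ?n = "length xs"
  let ?S = "\<lambda>s. {I. I \<subseteq> {..<?n} \<and> card I = s}"
  let ?f = "\<lambda>I. \<Sum>i\<in>I. (xs @ [x]) ! i"
  have fin: "finite (?S s)" for s
    by (rule finite_subset[of _ "Pow {..<?n}"]) auto
  have inj: "inj_on (insert ?n) (?S s)"
    by (rule inj_onI) (metis insert_ident lessThan_iff less_irrefl mem_Collect_eq subsetD)
  have disj: "?S (Suc s) \<inter> insert ?n ` ?S s = {}"
    by auto
  have old: "?f I = (\<Sum>i\<in>I. xs ! i)" if "I \<subseteq> {..<?n}" for I
    using that by (intro sum.cong) (auto simp: nth_append)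
  have new: "?f (insert ?n I) = x + (\<Sum>i\<in>I. xs ! i)" if "I \<subseteq> {..<?n}" for I
    using that old[OF that] by (subst sum.insert) (auto dest: finite_subset)
  have "index_subset_sums (Suc s) (xs @ [x]) =
      image_mset ?f (mset_set (?S (Suc s))) + image_mset (?f \<circ> insert ?n) (mset_set (?S s))"
    by (simp add: index_subset_sums_def subsets_card_Suc_lessThan_Suc mset_set_Union fin disj
        flip: image_mset_mset_set[OF inj] multiset.map_comp)
  also have "\<dots> = index_subset_sums (Suc s) xs + image_mset ((+) x) (index_subset_sums s xs)"
    unfolding index_subset_sums_def multiset.map_comp
    by (intro arg_cong2[where f = "(+)"] image_mset_cong) (simp_all add: fin old new)
  finally show ?thesis .
qed

lemma index_subset_sums_eq_subset_sums: "index_subset_sums s xs = subset_sums s (rev xs)"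
proof (induction xs arbitrary: s rule: rev_induct)
  case Nil
  then show ?case by (cases s) (simp_all add: index_subset_sums_0 index_subset_sums_Suc_Nil)
next
  case (snoc x xs)
  then show ?case by (cases s) (simp_all add: index_subset_sums_0 index_subset_sums_snoc)
qed

lemma ssums_eq_subset_sums: "mset xs = A \<Longrightarrow> ssums s A = subset_sums s xs"
proof -
  assume A: "mset xs = A"
  define ys where "ys = (SOME ys. mset ys = A)"
  have ys: "mset ys = A"
    unfolding ys_def using A by (rule someI)
  then have "size A = length ys" by auto
  then have "ssums s A = index_subset_sums s ys"
    by (simp add: ssums_def index_subset_sums_def Let_def flip: ys_def)
  also have "\<dots> = subset_sums s xs"
    using A ys by (simp add: index_subset_sums_eq_subset_sums subset_sums_perm)
  finally show ?thesis .
qed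

lemma ssums_0 [simp]: "ssums 0 A = {#0#}"
  using ssums_eq_subset_sums ex_mset by (metis subset_sums.simps(1))

lemma ssums_empty [simp]: "ssums (Suc s) {#} = {#}"
  using ssums_eq_subset_sums[of "[]"] by simp

lemma ssums_add_mset [simp]:
  "ssums (Suc s) (add_mset x A) = ssums (Suc s) A + image_mset ((+) x) (ssums s A)"
proof -
  obtain xs where "mset xs = A" using ex_mset by blast
  then show ?thesis
    using ssums_eq_subset_sums[of xs] ssums_eq_subset_sums[of "x # xs"] by simp
qed

lemma ssums_Suc_0 [simp]: "ssums (Suc 0) A = A"
  by (induction A) auto

lemma replicate_mset_add: "replicate_mset (m + n) x = replicate_mset m x + replicate_mset n x"
  by (induction m) simp_all

lemma ssums_replicate_mset:
  "ssums s (replicate_mset m x) = replicate_mset (m choose s) (of_nat s * x)"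
proof (induction m arbitrary: s)
  case 0
  then show ?case by (cases s) simp_all
next
  case (Suc m)
  then show ?case by (cases s) (simp_all add: algebra_simps replicate_mset_add)
qed

lemma choose_three: "m choose 3 = m * (m - 1) * (m - 2) div 6"
proof -
  have "6 * (m choose 3) = m * (m - 1) * (m - 2)"
  proof (cases m)
    case (Suc n)
    have three: "3 * (Suc n choose 3) = Suc n * (n choose 2)"
      using Suc_times_binomial[of 2 n] by (simp add: numeral_3_eq_3 numeral_2_eq_2)
    have two: "2 * (n choose 2) = n * (n - 1)"
    proof (cases n)
      case (Suc n')
      then show ?thesis using Suc_times_binomial[of 1 n'] by (simp add: numeral_2_eq_2)
    qed simp
    have "6 * (Suc n choose 3) = 2 * (3 * (Suc n choose 3))" by simp
    also have "\<dots> = Suc n * (n * (n - 1))" unfolding three two[symmetric] by simp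
    finally show ?thesis using Suc by (simp add: algebra_simps)
  qed simp
  then show ?thesis by simp
qed

lemma ssums_singleton [simp]: "ssums 2 {#x#} = {#}" "ssums 3 {#x#} = {#}"
  by (simp_all add: numeral_2_eq_2 numeral_3_eq_3)

lemma ssums_reflect:
  "ssums s (image_mset (\<lambda>x. c - x) A) = image_mset (\<lambda>v. of_nat s * c - v) (ssums s A)"
proof (induction A arbitrary: s)
  case empty
  then show ?case by (cases s) simp_all
next
  case (add x A)
  then show ?case by (cases s) (simp_all add: multiset.map_comp comp_def algebra_simps)
qed

definition sumset :: "'a::comm_monoid_add multiset \<Rightarrow> 'a multiset \<Rightarrow> 'a multiset" where
  "sumset X Y = (\<Sum>x\<in>#X. image_mset ((+) x) Y)"

lemma sumset_empty [simp]: "sumset {#} Y = {#}" "sumset X {#} = {#}"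
  by (simp_all add: sumset_def)

lemma sumset_add_mset_left: "sumset (add_mset x X) Y = image_mset ((+) x) Y + sumset X Y"
  by (simp add: sumset_def)

lemma sumset_add_mset_right: "sumset X (add_mset y Y) = sumset X Y + image_mset ((+) y) X"
  by (induction X) (simp_all add: sumset_def add_ac)

lemma sumset_union [simp]:
  "sumset (X1 + X2) Y = sumset X1 Y + sumset X2 Y"
  "sumset X (Y1 + Y2) = sumset X Y1 + sumset X Y2"
  by (simp_all add: sumset_def sum_mset.distrib)

lemma sumset_singleton [simp]:
  "sumset {#u#} Y = image_mset ((+) u) Y"
  "sumset X {#v#} = image_mset (\<lambda>x. x + v) X"
  by (simp_all add: sumset_def)

lemma sumset_replicate_mset [simp]:
  "sumset (replicate_mset m u) (replicate_mset n v) = replicate_mset (m * n) (u + v)"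
  by (induction m) (simp_all add: sumset_def replicate_mset_add add_ac)

lemma image_mset_plus_sumset: "image_mset ((+) x) (sumset X Y) = sumset X (image_mset ((+) x) Y)"
  by (induction X) (simp_all add: sumset_def multiset.map_comp comp_def add_ac)

lemma ssums2_union: "ssums 2 (A + B) = ssums 2 A + sumset A B + ssums 2 B"
  by (induction B) (simp_all add: numeral_2_eq_2 sumset_add_mset_right add_ac)

lemma ssums3_union:
  "ssums 3 (A + B) = ssums 3 A + sumset (ssums 2 A) B + sumset A (ssums 2 B) + ssums 3 B"
proof (induction B)
  case (add x B)
  have s3: "ssums 3 (add_mset y C) = ssums 3 C + image_mset ((+) y) (ssums 2 C)" for y C
    by (simp add: numeral_3_eq_3 numeral_2_eq_2)
  have s2: "ssums 2 (add_mset y C) = ssums 2 C + image_mset ((+) y) C" for y C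
    by (simp add: numeral_2_eq_2)
  have "ssums 3 (A + add_mset x B) = ssums 3 (A + B) + image_mset ((+) x) (ssums 2 (A + B))"
    using s3[of x "A + B"] by simp
  with add.IH show ?case
    by (simp add: s2 s3 ssums2_union sumset_add_mset_right image_mset_plus_sumset add_ac)
qed (simp add: numeral_3_eq_3 numeral_2_eq_2)

section \<open>Power sums of 3-sums\<close>

lemma sum_ssums2:
  fixes g :: "complex \<Rightarrow> 'b::comm_ring_1"
  shows "2 * (\<Sum>v\<in>#ssums 2 A. g v) = (\<Sum>a\<in>#A. \<Sum>b\<in>#A. g (a + b)) - (\<Sum>a\<in>#A. g (2 * a))"
proof (induction A)
  case empty
  then show ?case by (simp add: numeral_2_eq_2)
next
  case (add x A)
  have "2 * (\<Sum>v\<in>#ssums 2 (add_mset x A). g v) =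
      2 * (\<Sum>v\<in>#ssums 2 A. g v) + 2 * (\<Sum>a\<in>#A. g (x + a))"
    by (simp add: numeral_2_eq_2 algebra_simps multiset.map_comp comp_def)
  also have "\<dots> = (\<Sum>a\<in>#A. \<Sum>b\<in>#A. g (a + b)) - (\<Sum>a\<in>#A. g (2 * a)) + 2 * (\<Sum>a\<in>#A. g (x + a))"
    using add.IH by simp
  finally show ?case
    by (simp add: sum_mset.distrib algebra_simps flip: mult_2)
qed

lemma sum_ssums3:
  fixes g :: "complex \<Rightarrow> 'b::comm_ring_1"
  shows "6 * (\<Sum>v\<in>#ssums 3 A. g v) =
    (\<Sum>a\<in>#A. \<Sum>b\<in>#A. \<Sum>c\<in>#A. g (a + b + c)) - 3 * (\<Sum>a\<in>#A. \<Sum>b\<in>#A. g (2 * a + b))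
      + 2 * (\<Sum>a\<in>#A. g (3 * a))"
proof (induction A)
  case empty
  then show ?case by (simp add: numeral_3_eq_3)
next
  case (add x A)
  have "6 * (\<Sum>v\<in>#ssums 3 (add_mset x A). g v) =
      6 * (\<Sum>v\<in>#ssums 3 A. g v) + 3 * (2 * (\<Sum>v\<in>#ssums 2 A. g (x + v)))"
    by (simp add: numeral_3_eq_3 numeral_2_eq_2 algebra_simps multiset.map_comp comp_def)
  also have "\<dots> = (\<Sum>a\<in>#A. \<Sum>b\<in>#A. \<Sum>c\<in>#A. g (a + b + c))
      - 3 * (\<Sum>a\<in>#A. \<Sum>b\<in>#A. g (2 * a + b)) + 2 * (\<Sum>a\<in>#A. g (3 * a))
      + 3 * ((\<Sum>a\<in>#A. \<Sum>b\<in>#A. g (x + (a + b))) - (\<Sum>a\<in>#A. g (x + 2 * a)))"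
    unfolding add.IH sum_ssums2[of "\<lambda>v. g (x + v)" A] ..
  moreover have "(\<Sum>a\<in>#add_mset x A. \<Sum>b\<in>#add_mset x A. \<Sum>c\<in>#add_mset x A. g (a + b + c)) =
      (\<Sum>a\<in>#A. \<Sum>b\<in>#A. \<Sum>c\<in>#A. g (a + b + c)) + 3 * (\<Sum>a\<in>#A. \<Sum>b\<in>#A. g (x + (a + b)))
        + 3 * (\<Sum>a\<in>#A. g (2 * x + a)) + g (3 * x)"
    by (simp add: sum_mset.distrib algebra_simps sum_mset_distrib_left[symmetric])
  moreover have "(\<Sum>a\<in>#add_mset x A. \<Sum>b\<in>#add_mset x A. g (2 * a + b)) =
      (\<Sum>a\<in>#A. \<Sum>b\<in>#A. g (2 * a + b)) + (\<Sum>a\<in>#A. g (x + 2 * a)) + (\<Sum>b\<in>#A. g (2 * x + b))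
        + g (3 * x)"
    by (simp add: sum_mset.distrib algebra_simps sum_mset_distrib_left[symmetric])
  moreover have "(\<Sum>a\<in>#add_mset x A. g (3 * a)) = (\<Sum>a\<in>#A. g (3 * a)) + g (3 * x)"
    by simp
  ultimately show ?case
    by (simp add: algebra_simps)
qed

definition power_sum :: "nat \<Rightarrow> 'a::comm_semiring_1 multiset \<Rightarrow> 'a" where
  "power_sum k A = (\<Sum>a\<in>#A. a ^ k)"

lemma power_sum_0: "power_sum 0 A = of_nat (size A)"
  by (simp add: power_sum_def)

lemma sum_mset_sum_swap: "(\<Sum>a\<in>#A. \<Sum>i\<in>I. f a i) = (\<Sum>i\<in>I. \<Sum>a\<in>#A. f a i)"
  by (induction A) (simp_all add: sum.distrib)

lemma multiset_eq_if_power_sums_eq: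
  fixes A B :: "'a::{idom,ring_char_0} multiset"
  assumes "\<And>k. power_sum k A = power_sum k B"
  shows "A = B"
proof (rule multiset_eqI)
  fix v
  define p where "p = (\<Prod>w\<in>(set_mset A \<union> set_mset B) - {v}. [:-w, 1:])"
  have p: "poly p x = (\<Prod>w\<in>(set_mset A \<union> set_mset B) - {v}. x - w)" for x
    by (simp add: p_def poly_prod)
  have "poly p v \<noteq> 0"
    unfolding p by simp
  have delta: "(\<Sum>a\<in>#X. poly p a) = poly p v * of_nat (count X v)"
    if "set_mset X \<subseteq> set_mset A \<union> set_mset B" for X
  proof -
    have "(\<Sum>a\<in>#X. poly p a) = (\<Sum>a\<in>#X. if a = v then poly p v else 0)"
      using that by (intro arg_cong[where f = sum_mset] image_mset_cong) (auto simp: p)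
    then show ?thesis by (simp add: sum_mset_delta)
  qed
  have "(\<Sum>a\<in>#X. poly p a) = (\<Sum>i\<le>degree p. coeff p i * power_sum i X)" for X
    by (simp add: poly_altdef sum_mset_sum_swap power_sum_def sum_mset_distrib_left)
  with assms have "(\<Sum>a\<in>#A. poly p a) = (\<Sum>a\<in>#B. poly p a)"
    by simp
  with delta[of A] delta[of B] \<open>poly p v \<noteq> 0\<close> show "count A v = count B v"
    by simp
qed

definition trinomial_form :: "nat \<Rightarrow> (nat \<Rightarrow> 'a::comm_semiring_1) \<Rightarrow> 'a" where
  "trinomial_form k p =
     (\<Sum>i\<le>k. \<Sum>j\<le>k - i. of_nat ((k choose i) * ((k - i) choose j)) * p i * p j * p (k - i - j))"

definition binomial_form :: "nat \<Rightarrow> (nat \<Rightarrow> 'a::comm_semiring_1) \<Rightarrow> 'a" where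
  "binomial_form k p = (\<Sum>i\<le>k. of_nat (k choose i) * 2 ^ i * p i * p (k - i))"

lemma trinomial_expansion:
  fixes a b c :: "'a::comm_semiring_1"
  shows "(a + b + c) ^ k =
    (\<Sum>i\<le>k. \<Sum>j\<le>k - i. of_nat ((k choose i) * ((k - i) choose j)) * a ^ i * b ^ j * c ^ (k - i - j))"
proof -
  have "(a + b + c) ^ k = (a + (b + c)) ^ k"
    by (simp add: add_ac)
  also have "\<dots> = (\<Sum>i\<le>k. of_nat (k choose i) * a ^ i * (b + c) ^ (k - i))"
    by (rule binomial_ring)
  finally show ?thesis
    by (simp add: binomial_ring sum_distrib_left mult_ac)
qed

lemma power_sum_triple_sum:
  "(\<Sum>a\<in>#A. \<Sum>b\<in>#A. \<Sum>c\<in>#A. (a + b + c) ^ k) = trinomial_form k (\<lambda>i. power_sum i A)"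
  by (simp add: trinomial_expansion trinomial_form_def sum_mset_sum_swap power_sum_def
      sum_mset_distrib_left sum_mset_distrib_right mult_ac)

lemma power_sum_double_sum:
  "(\<Sum>a\<in>#A. \<Sum>b\<in>#A. (2 * a + b) ^ k) = binomial_form k (\<lambda>i. power_sum i A)"
  by (simp add: binomial_ring binomial_form_def sum_mset_sum_swap power_sum_def
      sum_mset_distrib_left sum_mset_distrib_right mult_ac power_mult_distrib)

lemma trinomial_form_diff:
  fixes p q :: "nat \<Rightarrow> 'a::comm_ring_1"
  assumes k: "1 \<le> k" and eq: "\<And>i. i < k \<Longrightarrow> p i = q i"
  shows "trinomial_form k p - trinomial_form k q = 3 * p 0 ^ 2 * (p k - q k)"
proof -
  define d where "d = p 0 ^ 2 * (p k - q k)"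
  have q0: "q 0 = p 0" using eq k by simp
  have termwise: "of_nat ((k choose i) * ((k - i) choose j)) * p i * p j * p (k - i - j)
      - of_nat ((k choose i) * ((k - i) choose j)) * q i * q j * q (k - i - j)
      = (if i = k then d else 0) + (if i = 0 \<and> j = k then d else 0) + (if i = 0 \<and> j = 0 then d else 0)"
    if ij: "i \<le> k" "j \<le> k - i" for i j
  proof -
    consider "i = k" | "i = 0 \<and> j = k" | "i = 0 \<and> j = 0" | "i < k \<and> j < k \<and> k - i - j < k"
      using ij k by linarith
    then show ?thesis
    proof cases
      case 4
      then have "i \<noteq> k" "\<not> (i = 0 \<and> j = k)" "\<not> (i = 0 \<and> j = 0)" by auto
      with 4 eq show ?thesis by auto
    qed (use ij k q0 in \<open>simp_all add: d_def power2_eq_square algebra_simps\<close>)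
  qed
  have "trinomial_form k p - trinomial_form k q = (\<Sum>i\<le>k. \<Sum>j\<le>k - i.
      (if i = k then d else 0) + (if i = 0 \<and> j = k then d else 0) + (if i = 0 \<and> j = 0 then d else 0))"
    unfolding trinomial_form_def sum_subtractf[symmetric] by (intro sum.cong refl termwise) auto
  also have "\<dots> = 3 * d"
  proof -
    have inner: "(\<Sum>j\<le>k - i. if i = k then d else 0) = (if i = k then d else 0)"
      "(\<Sum>j\<le>k - i. if i = 0 \<and> j = k then d else 0) = (if i = 0 then d else 0)"
      "(\<Sum>j\<le>k - i. if i = 0 \<and> j = 0 then d else 0) = (if i = 0 then d else 0)" for i
      by (cases "i = k"; cases "i = 0"; simp)+
    show ?thesis
      unfolding sum.distrib inner by simp
  qed
  finally show ?thesis by (simp add: d_def mult.assoc)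
qed

lemma binomial_form_diff:
  fixes p q :: "nat \<Rightarrow> 'a::comm_ring_1"
  assumes k: "1 \<le> k" and eq: "\<And>i. i < k \<Longrightarrow> p i = q i"
  shows "binomial_form k p - binomial_form k q = (2 ^ k + 1) * p 0 * (p k - q k)"
proof -
  define d where "d = p 0 * (p k - q k)"
  have q0: "q 0 = p 0" using eq k by simp
  have termwise: "of_nat (k choose i) * 2 ^ i * p i * p (k - i) - of_nat (k choose i) * 2 ^ i * q i * q (k - i)
      = (if i = k then 2 ^ k * d else 0) + (if i = 0 then d else 0)"
    if i: "i \<le> k" for i
  proof -
    consider "i = k" | "i = 0" | "0 < i \<and> i < k" using i k by linarith
    then show ?thesis
    proof cases
      case 3
      with eq show ?thesis by auto
    qed (use i k q0 in \<open>simp_all add: d_def algebra_simps\<close>)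
  qed
  have "binomial_form k p - binomial_form k q =
      (\<Sum>i\<le>k. (if i = k then 2 ^ k * d else 0) + (if i = 0 then d else 0))"
    unfolding binomial_form_def sum_subtractf[symmetric] by (intro sum.cong refl termwise) auto
  then show ?thesis by (simp add: sum.distrib d_def algebra_simps)
qed

lemma power_sum_ssums3_constraint:
  assumes S: "ssums 3 A = ssums 3 B" and k: "1 \<le> k"
    and eq: "\<And>i. i < k \<Longrightarrow> power_sum i A = power_sum i B"
  shows "(3 * of_nat (size A) ^ 2 - 3 * (2 ^ k + 1) * of_nat (size A) + 2 * 3 ^ k)
           * (power_sum k A - power_sum k B) = 0"
proof -
  let ?p = "\<lambda>X i. power_sum i X"
  have newton: "6 * power_sum k (ssums 3 X) =
      trinomial_form k (?p X) - 3 * binomial_form k (?p X) + 2 * (3 ^ k * power_sum k X)" for X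
  proof -
    have "(\<Sum>a\<in>#X. (3 * a) ^ k) = 3 ^ k * power_sum k X"
      by (simp add: power_sum_def power_mult_distrib sum_mset_distrib_left)
    then show ?thesis
      unfolding power_sum_def[of k "ssums 3 X"]
      using sum_ssums3[of "\<lambda>v. v ^ k" X] power_sum_triple_sum[where A = X] power_sum_double_sum[where A = X]
      by simp
  qed
  have "0 = (trinomial_form k (?p A) - trinomial_form k (?p B))
      - 3 * (binomial_form k (?p A) - binomial_form k (?p B)) + 2 * 3 ^ k * (power_sum k A - power_sum k B)"
    using newton[of A] newton[of B] S by (simp add: algebra_simps)
  also have "\<dots> = 3 * power_sum 0 A ^ 2 * (power_sum k A - power_sum k B)
      - 3 * ((2 ^ k + 1) * power_sum 0 A * (power_sum k A - power_sum k B))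
      + 2 * 3 ^ k * (power_sum k A - power_sum k B)"
    using trinomial_form_diff[of k "?p A" "?p B"] binomial_form_diff[of k "?p A" "?p B"] k eq
    by simp
  finally show ?thesis by (simp add: power_sum_0 algebra_simps)
qed

section \<open>The size equation\<close>

lemma three_power_dvd_two_power_plus_one:
  fixes k m :: nat
  assumes "3 ^ m dvd (2::nat) ^ k + 1"
  shows "3 ^ (m - 1) dvd k"
proof (cases m)
  case 0
  then show ?thesis by simp
next
  case (Suc m')
  have ord_3_2: "ord 3 (2::nat) = 2"
  proof -
    have "ord 3 (2::nat) dvd 2" "\<not> ord 3 (2::nat) dvd 1"
      by (subst ord_divides'[symmetric], simp add: cong_def)+
    then show ?thesis
      using dvd_imp_le[of "ord 3 (2::nat)" 2] by (cases "ord 3 (2::nat)") (auto simp: le_Suc_eq)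
  qed
  have "residue_primroot 3 (2::nat)"
    by (simp add: residue_primroot_def ord_3_2 totient_prime)
  then have "\<forall>j>0. residue_primroot (3 ^ j) (2::nat)"
    using residue_primroot_prime_lift_iff[of 3 2] by (simp add: cong_def)
  then have "residue_primroot (3 ^ m) (2::nat)"
    using Suc by blast
  then have ord: "ord (3 ^ m) (2::nat) = 2 * 3 ^ m'"
    using totient_prime_power_Suc[of 3 m'] Suc by (simp add: residue_primroot_def)
  have "(2::nat) ^ (2 * k) - 1 = (2 ^ k + 1) * (2 ^ k - 1)"
    by (simp add: power_mult power2_eq_square algebra_simps mult.commute[of 2 k])
  then have "3 ^ m dvd (2::nat) ^ (2 * k) - 1"
    using assms by (simp only:) (rule dvd_mult2)
  then have "[(2::nat) ^ (2 * k) = 1] (mod 3 ^ m)"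
    by (simp add: cong_altdef_nat)
  then have "2 * 3 ^ m' dvd 2 * k"
    by (simp add: ord_divides' ord)
  then show ?thesis using Suc by simp
qed

lemma factor_pair_two_times_three_power:
  fixes n n' K :: nat
  assumes prod: "n * n' = 2 * 3 ^ K"
  obtains a b where "a + b = K" "n = 3 ^ a \<and> n' = 2 * 3 ^ b \<or> n = 2 * 3 ^ a \<and> n' = 3 ^ b"
proof -
  have "n * n' \<noteq> 0" using prod by simp
  then have nz: "n \<noteq> 0" "n' \<noteq> 0" by auto
  define a b where "a = multiplicity 3 n" and "b = multiplicity 3 n'"
  obtain r where r: "n = 3 ^ a * r" "\<not> 3 dvd r"
    using multiplicity_decompose'[of n 3] nz unfolding a_def by auto
  obtain r' where r': "n' = 3 ^ b * r'" "\<not> 3 dvd r'"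
    using multiplicity_decompose'[of n' 3] nz unfolding b_def by auto
  have "multiplicity 3 (n * n') = K"
    unfolding prod by (rule multiplicity_decomposeI) auto
  then have ab: "a + b = K"
    using prime_elem_multiplicity_mult_distrib[of 3 n n'] nz by (simp add: a_def b_def)
  have "3 ^ K * (r * r') = n * n'"
    by (simp add: r(1) r'(1) power_add mult_ac flip: ab)
  then have "r * r' = 2"
    using prod by simp
  then have "r = 1 \<and> r' = 2 \<or> r = 2 \<and> r' = 1"
    using prime_product[of r r'] by auto
  with ab r(1) r'(1) show ?thesis
    using that by auto
qed

lemma linear_two_power_lt_three_power:
  "12 \<le> k \<Longrightarrow> 3 * k * (2 ^ k + 1) < (3::nat) ^ (k - 1)"
proof (induction k rule: dec_induct)
  case base
  then show ?case by simp
next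
  case (step k)
  have "2 * 2 ^ k \<le> k * 2 ^ k" using step(1) by (intro mult_right_mono) auto
  then have "2 * 2 ^ k + 1 \<le> k * 2 ^ k + 2 * k" using step(1) by linarith
  then have "3 * Suc k * (2 ^ Suc k + 1) \<le> 3 * (3 * k * (2 ^ k + 1))"
    by (simp add: algebra_simps; linarith)
  also have "\<dots> < 3 * 3 ^ (k - 1)" using step(3) by simp
  also have "\<dots> = 3 ^ (Suc k - 1)" using step(1) by (cases k) auto
  finally show ?case .
qed

lemma nat_quadratic_root_split:
  fixes n c s :: nat
  assumes eq: "n ^ 2 + c = s * n"
  obtains n' where "n + n' = s" "n * n' = c"
proof
  have "n \<le> s"
  proof (rule ccontr)
    assume "\<not> n \<le> s"
    then have "s * n < n * n" by (intro mult_strict_right_mono) auto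
    with eq show False by (simp add: power2_eq_square)
  qed
  then show "n + (s - n) = s" by simp
  have "n * (s - n) = s * n - n * n"
    by (simp add: diff_mult_distrib2 mult.commute)
  with eq show "n * (s - n) = c"
    by (simp add: power2_eq_square)
qed

lemma exponent_lt_12_if_two_power_plus_one_split:
  fixes n n' a b k :: nat
  assumes sum: "n + n' = 2 ^ k + 1" and k: "1 \<le> k" and ab: "a + b = k - 1"
    and dvd: "3 ^ a dvd n" "3 ^ b dvd n'" and nz: "n \<noteq> 0" "n' \<noteq> 0"
  shows "k < 12"
proof -
  have "3 ^ min a b dvd n" "3 ^ min a b dvd n'"
    using dvd by (meson dvd_trans le_imp_power_dvd min.cobounded1 min.cobounded2)+
  then have "3 ^ min a b dvd (2::nat) ^ k + 1"
    by (metis dvd_add sum)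
  then have "3 ^ (min a b - 1) \<le> k"
    using three_power_dvd_two_power_plus_one k by (auto intro: dvd_imp_le)
  then have "3 ^ min a b \<le> 3 * k"
    by (cases "min a b") auto
  moreover have "3 ^ max a b \<le> (2::nat) ^ k + 1"
    using dvd nz sum dvd_imp_le[of "3 ^ a" n] dvd_imp_le[of "3 ^ b" n'] by (auto simp: max_def)
  ultimately have "3 ^ min a b * 3 ^ max a b \<le> 3 * k * ((2::nat) ^ k + 1)"
    by (rule mult_mono) auto
  moreover have "min a b + max a b = k - 1"
    using ab by (simp add: min_def max_def)
  ultimately have "3 ^ (k - 1) \<le> 3 * k * ((2::nat) ^ k + 1)"
    by (simp flip: power_add)
  then show ?thesis
    using linear_two_power_lt_three_power[of k] by fastforce
qed

lemma size_equation_solutions: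
  fixes n k :: nat
  assumes k: "1 \<le> k" and n: "3 < n" and eq: "3 * n ^ 2 + 2 * 3 ^ k = 3 * (2 ^ k + 1) * n"
  shows "n \<in> {6, 27, 486}"
proof -
  obtain K where kK: "k = Suc K" using k by (cases k) auto
  have eq': "n ^ 2 + 2 * 3 ^ K = (2 ^ k + 1) * n"
    using eq unfolding kK by (simp add: algebra_simps)
  then obtain n' where sum: "n + n' = 2 ^ k + 1" and prod: "n * n' = 2 * 3 ^ K"
    by (rule nat_quadratic_root_split)
  from prod obtain a b where ab: "a + b = K" "n = 3 ^ a \<and> n' = 2 * 3 ^ b \<or> n = 2 * 3 ^ a \<and> n' = 3 ^ b"
    by (rule factor_pair_two_times_three_power)
  have "k < 12"
    using sum k by (rule exponent_lt_12_if_two_power_plus_one_split[where a = a and b = b])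
      (use ab kK in auto)
  with ab(1) kK have "K \<in> {0,1,2,3,4,5,6,7,8,9,10}" "a \<in> {0,1,2,3,4,5,6,7,8,9,10}"
    by (simp_all; presburger)+
  moreover have "n = 3 ^ a \<or> n = 2 * 3 ^ a" using ab(2) by auto
  ultimately show ?thesis
    using eq' n unfolding kK by auto
qed

section \<open>Sizes of 3-sum collisions\<close>

lemma size_in_6_27_486_if_ssums3_eq:
  assumes n: "3 < n" and size: "size A = n" "size B = n" and "A \<noteq> B"
    and S: "ssums 3 A = ssums 3 B"
  shows "n \<in> {6, 27, 486}"
proof -
  have "\<exists>k. power_sum k A \<noteq> power_sum k B"
    using multiset_eq_if_power_sums_eq \<open>A \<noteq> B\<close> by blast
  define k where "k = (LEAST k. power_sum k A \<noteq> power_sum k B)"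
  have diff: "power_sum k A \<noteq> power_sum k B"
    unfolding k_def by (rule LeastI_ex) fact
  have below: "\<And>i. i < k \<Longrightarrow> power_sum i A = power_sum i B"
    unfolding k_def using not_less_Least by blast
  have k: "1 \<le> k"
    using diff size by (cases k) (auto simp: power_sum_0)
  have "3 * of_nat n ^ 2 - 3 * (2 ^ k + 1) * of_nat n + 2 * 3 ^ k = (0::complex)"
    using power_sum_ssums3_constraint[OF S k below] size diff by simp
  then have "of_nat (3 * n ^ 2 + 2 * 3 ^ k) = (of_nat (3 * (2 ^ k + 1) * n) :: complex)"
    by (simp add: algebra_simps)
  then have "3 * n ^ 2 + 2 * 3 ^ k = 3 * (2 ^ k + 1) * n"
    by (simp only: of_nat_eq_iff)
  with k n show ?thesis
    by (rule size_equation_solutions)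
qed

lemma mirror_collision:
  fixes A :: "complex multiset" and c y :: complex
  assumes mean: "2 * (sum_mset A / of_nat (size A)) = c"
    and symmetric: "image_mset (\<lambda>v. 3 * c - v) (ssums 3 A) = ssums 3 A"
    and "y \<in># A" "c - y \<notin># A"
  shows "mirror A \<noteq> A \<and> ssums 3 (mirror A) = ssums 3 A"
proof
  have mirror: "mirror A = image_mset (\<lambda>x. c - x) A"
    using mean by (simp add: mirror_def Let_def)
  show "mirror A \<noteq> A"
    using \<open>y \<in># A\<close> \<open>c - y \<notin># A\<close> by (metis image_eqI mirror set_image_mset)
  show "ssums 3 (mirror A) = ssums 3 A"
    using symmetric by (simp add: mirror ssums_reflect)
qed

lemma mirror_collision_6:
  defines "A \<equiv> replicate_mset 2 0 + replicate_mset 3 2 + {#3::complex#}"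
  shows "mirror A \<noteq> A \<and> ssums 3 (mirror A) = ssums 3 A"
proof (rule mirror_collision[where c = 3 and y = 2])
  show "image_mset (\<lambda>v. 3 * 3 - v) (ssums 3 A) = ssums 3 A"
    unfolding A_def ssums3_union ssums2_union
    by (simp add: ssums_replicate_mset choose_two choose_three)
qed (simp_all add: A_def)

(* After simplification both sides are sums of replicate_mset at the points 0, ..., 12, so
   comparing multiplicities at these points decides the equation. *)
lemma mirror_collision_27_a:
  defines "A \<equiv> {#0#} + replicate_mset 16 1 + replicate_mset 10 (2::complex)"
  shows "mirror A \<noteq> A \<and> ssums 3 (mirror A) = ssums 3 A"
proof (rule mirror_collision[where c = "8 / 3" and y = 0])
  show "image_mset (\<lambda>v. 3 * (8 / 3) - v) (ssums 3 A) = ssums 3 A"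
    unfolding A_def ssums3_union ssums2_union
    apply (simp add: ssums_replicate_mset choose_two choose_three sumset_add_mset_left)
    apply (rule multiset_eqI)
    subgoal for x by (cases "x \<in> {0, 1, 2, 3, 4, 5, 6, 7, 8, 9, 10, 11, 12}") auto
    done
qed (simp_all add: A_def)

lemma mirror_collision_27_b:
  defines "A \<equiv> replicate_mset 5 0 + replicate_mset 10 1 + replicate_mset 10 2 + replicate_mset 2 (3::complex)"
  shows "mirror A \<noteq> A \<and> ssums 3 (mirror A) = ssums 3 A"
proof (rule mirror_collision[where c = "8 / 3" and y = 0])
  show "image_mset (\<lambda>v. 3 * (8 / 3) - v) (ssums 3 A) = ssums 3 A"
    unfolding A_def ssums3_union ssums2_union
    apply (simp add: ssums_replicate_mset choose_two choose_three sumset_add_mset_left)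
    apply (rule multiset_eqI)
    subgoal for x by (cases "x \<in> {0, 1, 2, 3, 4, 5, 6, 7, 8, 9, 10, 11, 12}") auto
    done
qed (simp_all add: A_def)

lemma mirror_collision_27_c:
  defines "A \<equiv> {#0#} + replicate_mset 5 1 + replicate_mset 10 2 + replicate_mset 6 3 + replicate_mset 5 (4::complex)"
  shows "mirror A \<noteq> A \<and> ssums 3 (mirror A) = ssums 3 A"
proof (rule mirror_collision[where c = "14 / 3" and y = 0])
  show "image_mset (\<lambda>v. 3 * (14 / 3) - v) (ssums 3 A) = ssums 3 A"
    unfolding A_def ssums3_union ssums2_union
    apply (simp add: ssums_replicate_mset choose_two choose_three sumset_add_mset_left)
    apply (rule multiset_eqI)
    subgoal for x by (cases "x \<in> {0, 1, 2, 3, 4, 5, 6, 7, 8, 9, 10, 11, 12, 13, 14}") auto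
    done
qed (simp_all add: A_def)

lemma mirror_collision_486:
  defines "A \<equiv> replicate_mset 22 0 + replicate_mset 176 1 + replicate_mset 231 2 + replicate_mset 56 3 + {#4::complex#}"
  shows "mirror A \<noteq> A \<and> ssums 3 (mirror A) = ssums 3 A"
proof (rule mirror_collision[where c = "10 / 3" and y = 0])
  show "image_mset (\<lambda>v. 3 * (10 / 3) - v) (ssums 3 A) = ssums 3 A"
    unfolding A_def ssums3_union ssums2_union
    apply (simp add: ssums_replicate_mset choose_two choose_three sumset_add_mset_left)
    apply (rule multiset_eqI)
    subgoal for x by (cases "x \<in> {0, 1, 2, 3, 4, 5, 6, 7, 8, 9, 10, 11, 12}") auto
    done
qed (simp_all add: A_def)

theorem mainTheorem13:
  shows "(\<forall>n::nat. n > 3 \<longrightarrow>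
           ((\<exists>A B :: complex multiset. size A = n \<and> size B = n \<and> A \<noteq> B \<and>
               ssums 3 A = ssums 3 B) \<longleftrightarrow> n \<in> {6, 27, 486}))
   \<and> (\<forall>A \<in> {
        {#0#} + replicate_mset 16 1 + replicate_mset 10 2,
        replicate_mset 5 0 + replicate_mset 10 1 + replicate_mset 10 2 + replicate_mset 2 3,
        {#0#} + replicate_mset 5 1 + replicate_mset 10 2 + replicate_mset 6 3 + replicate_mset 5 4,
        replicate_mset 22 0 + replicate_mset 176 1 + replicate_mset 231 2 + replicate_mset 56 3 + {#4#}
       } :: complex multiset set.
        mirror A \<noteq> A \<and> ssums 3 (mirror A) = ssums 3 A)"
proof (intro conjI allI impI iffI)
  fix n :: nat
  assume "3 < n" and "\<exists>A B :: complex multiset. size A = n \<and> size B = n \<and> A \<noteq> B \<and> ssums 3 A = ssums 3 B"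
  then show "n \<in> {6, 27, 486}"
    using size_in_6_27_486_if_ssums3_eq by blast
next
  fix n :: nat
  have collision: "\<exists>A B :: complex multiset. size A = size X \<and> size B = size X \<and> A \<noteq> B \<and> ssums 3 A = ssums 3 B"
    if "mirror X \<noteq> X \<and> ssums 3 (mirror X) = ssums 3 X" for X
    using that by (intro exI[of _ X] exI[of _ "mirror X"]) (auto simp: mirror_def)
  assume "n \<in> {6, 27, 486}"
  then show "\<exists>A B :: complex multiset. size A = n \<and> size B = n \<and> A \<noteq> B \<and> ssums 3 A = ssums 3 B"
    using collision[OF mirror_collision_6] collision[OF mirror_collision_27_a]
      collision[OF mirror_collision_486]
    by auto
qed (use mirror_collision_27_a mirror_collision_27_b mirror_collision_27_c mirror_collision_486 in auto)

end
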